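(* Let $q$ be a prime power, $r\geq1$, $\delta\geq2$ integers, $R=r+\delta-1$, and $\ell,s,m$ integers with $\ell\geq1$, $s\geq0$, such that (C1) $\gcd(q,R)=1$; (C2) $(s+1)r<\ell R$; (C3) $s+1\leq\ell<q$; (C4) $\ell R\leq m$. Let $a_1,\dots,a_\ell\in\mathbb{F}_q^*$ be distinct, $h=\prod_{i=1}^{\ell}(T^R-a_i)$, and let $P\in\mathbb{F}_q[T]$ be a monic irreducible polynomial of degree $m$ with $P\equiv1\pmod h$. Let $\alpha\in\mathbb{F}_{q^m}$ be a root of $P$ and $\bar\phi$ the Drinfeld module over $\mathbb{F}_{q^m}$ with $\bar\phi_T=\alpha+\tau$. Let \[\mathcal M=\Big\{\sum_{k=0}^{s}g_k(\tau)\,\bar\phi_{T^R}^{\,k}\ :\ g_k\in\mathbb{F}_{q^m}\{\tau\}_{\leq r-1}\Big\},\] let $W_i=\bar\phi[T^R-a_i]$ and let $\{\beta^{(i)}_1,\dots,\beta^{(i)}_R\}$ be an $\mathbb{F}_q$-basis of $W_i$ for $i=1,\dots,\ell$. Define $\mathrm{enc}:\mathcal M\to\mathbb{F}_{q^m}^{\ell R}$ by $f\mapsto\big(f(\beta^{(i)}_j)\big)_{1\leq i\leq\ell,\,1\leq j\leq R}$, where $f$ acts via $\tau^i\mapsto x^{q^i}$. Then $\mathrm{enc}(\mathcal M)$, viewed as a matrix code in $\mathbb{F}_q^{m\times\ell R}$ via an $\mathbb{F}_q$-basis of $\mathbb{F}_{q^m}$, is an optimal $(m\times\ell R,\ m(s+1)r,\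 \ell R-Rs-r+1,\ r,\ \delta)$ rank-metric code: it has $\mathbb{F}_q$-dimension $m(s+1)r$, minimum rank distance $\ell R-Rs-r+1$, and rank-locality $(r,\delta)$, and it attains the bound $d_R\leq n-k+1-(\lceil k/r\rceil-1)(\delta-1)$ with $n=\ell R$, $k=(s+1)r$.
   Context: $\mathbb{F}_{q^m}\{\tau\}$ is the twisted polynomial ring with $(a\tau^i)(b\tau^j)=ab^{q^i}\tau^{i+j}$, and $\mathbb{F}_{q^m}\{\tau\}_{\leq n}$ its elements of $\tau$-degree at most $n$. A Drinfeld module $\bar\phi:\mathbb{F}_q[T]\to\mathbb{F}_{q^m}\{\tau\}$ is the $\mathbb{F}_q$-algebra homomorphism determined by $\bar\phi_T$; $\bar\phi[a]$ is the $\mathbb{F}_q$-space of roots of the $q$-linearized polynomial obtained from $\bar\phi_a$ by $\tau^i\mapsto x^{q^i}$. A vector $x\in\mathbb{F}_{q^m}^n$ is identified with the matrix in $\mathbb{F}_q^{m\times n}$ whose $j$-th column is the coordinate vector of $x_j$ in a fixed $\mathbb{F}_q$-basis of $\mathbb{F}_{q^m}$; the rank distance is the rank of the difference of matrices. An $(m\times n,K,d_R,r,\delta)$ rank-metric code is an $\mathbb{F}_q$-subspace of $\mathbb{F}_q^{m\times n}$ of $\mathbb{F}_q$-dimension $K$, minimum rank distance $d_R$ and rank-locality $(r,\delta)$, where rank-locality $(r,\delta)$ means: for every column index $i$ there is $\Gamma(i)\ni i$ with $|\Gamma(i)|\leq r+\delta-1$ and the code restricted to the columns in $\Gamma(i)$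 has minimum rank distance at least $\delta$. Any $(m\times n, mk)$ code with $(r,\delta)$ rank-locality satisfies $d_R\leq n-k+1-(\lceil k/r\rceil-1)(\delta-1)$; optimal means equality. *)

theory Defs
  imports Complex_Main "HOL-Computational_Algebra.Polynomial" "HOL-Library.Function_Algebras"
begin

definition span_over :: "'s set \<Rightarrow> ('s \<Rightarrow> 'v \<Rightarrow> 'v::ab_group_add) \<Rightarrow> 'v set \<Rightarrow> 'v set" where
  "span_over F sc S = {sum_list (map2 sc cs vs) | cs vs.
      length cs = length vs \<and> set cs \<subseteq> F \<and> set vs \<subseteq> S}"

definition indep_over :: "'s::zero set \<Rightarrow> ('s \<Rightarrow> 'v \<Rightarrow> 'v::ab_group_add) \<Rightarrow> 'v list \<Rightarrow> bool" where
  "indep_over F sc vs = (\<forall>cs. length cs = length vs \<and> set cs \<subseteq> F \<and>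
      sum_list (map2 sc cs vs) = 0 \<longrightarrow> set cs \<subseteq> {0})"

definition dim_over :: "'s::zero set \<Rightarrow> ('s \<Rightarrow> 'v \<Rightarrow> 'v::ab_group_add) \<Rightarrow> 'v set \<Rightarrow> nat" where
  "dim_over F sc V = (GREATEST d. \<exists>vs. length vs = d \<and> set vs \<subseteq> V \<and> indep_over F sc vs)"

definition subspace_over :: "'s set \<Rightarrow> ('s \<Rightarrow> 'v \<Rightarrow> 'v::ab_group_add) \<Rightarrow> 'v set \<Rightarrow> bool" where
  "subspace_over F sc V = (0 \<in> V \<and> (\<forall>x\<in>V. \<forall>y\<in>V. x + y \<in> V) \<and> (\<forall>c\<in>F. \<forall>x\<in>V. sc c x \<in> V))"

definition Fq :: "nat \<Rightarrow> 'k::field set" where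
  "Fq q = {x. x ^ q = x}"

definition vscale :: "'k::field \<Rightarrow> (nat \<Rightarrow> 'k) \<Rightarrow> (nat \<Rightarrow> 'k)" where
  "vscale c v = (\<lambda>j. c * v j)"

definition poly_over :: "nat \<Rightarrow> 'k::field poly \<Rightarrow> bool" where
  "poly_over q p = (\<forall>i. coeff p i \<in> Fq q)"

definition irreducible_over :: "nat \<Rightarrow> 'k::field poly \<Rightarrow> bool" where
  "irreducible_over q p = (poly_over q p \<and> degree p \<ge> 1 \<and>
     \<not> (\<exists>a b. poly_over q a \<and> poly_over q b \<and> degree a \<ge> 1 \<and> degree b \<ge> 1 \<and> p = a * b))"

section \<open>Twisted polynomials F_{q^m}{tau}, coefficient i = coefficient of tau^i\<close>

definition tmult :: "nat \<Rightarrow> 'k::field poly \<Rightarrow> 'k poly \<Rightarrow> 'k poly" where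
  "tmult q f g = (\<Sum>i\<le>degree f. \<Sum>j\<le>degree g. monom (coeff f i * coeff g j ^ (q ^ i)) (i + j))"

primrec tpow :: "nat \<Rightarrow> 'k::field poly \<Rightarrow> nat \<Rightarrow> 'k poly" where
  "tpow q f 0 = 1"
| "tpow q f (Suc n) = tmult q f (tpow q f n)"

definition teval :: "nat \<Rightarrow> 'k::field poly \<Rightarrow> 'k \<Rightarrow> 'k" where
  "teval q f x = (\<Sum>i\<le>degree f. coeff f i * x ^ (q ^ i))"

text \<open>Drinfeld module with phi_T = alpha + tau, applied to a in F_q[T].\<close>
definition drinfeld :: "nat \<Rightarrow> 'k::field \<Rightarrow> 'k poly \<Rightarrow> 'k poly" where
  "drinfeld q \<alpha> a = (\<Sum>i\<le>degree a. smult (coeff a i) (tpow q [:\<alpha>, 1:] i))"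

definition torsion :: "nat \<Rightarrow> 'k::field \<Rightarrow> 'k poly \<Rightarrow> 'k set" where
  "torsion q \<alpha> a = {x. teval q (drinfeld q \<alpha> a) x = 0}"

section \<open>Rank metric (vectors of length n as nat => 'k, zero beyond n)\<close>

text \<open>Rank of the m x n matrix over F_q = F_q-dimension of the span of the entries.\<close>
definition rank_wt :: "nat \<Rightarrow> nat \<Rightarrow> (nat \<Rightarrow> 'k::field) \<Rightarrow> nat" where
  "rank_wt q n x = dim_over (Fq q) (*) (x ` {..<n})"

definition min_rank_dist :: "nat \<Rightarrow> nat \<Rightarrow> (nat \<Rightarrow> 'k::field) set \<Rightarrow> nat" where
  "min_rank_dist q n C = Min {rank_wt q n (x - y) | x y. x \<in> C \<and> y \<in> C \<and> x \<noteq> y}"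

definition rank_locality :: "nat \<Rightarrow> nat \<Rightarrow> (nat \<Rightarrow> 'k::field) set \<Rightarrow> nat \<Rightarrow> nat \<Rightarrow> bool" where
  "rank_locality q n C r \<delta> = (\<forall>i<n. \<exists>\<Gamma>. i \<in> \<Gamma> \<and> \<Gamma> \<subseteq> {..<n} \<and> card \<Gamma> \<le> r + \<delta> - 1 \<and>
      (\<forall>x\<in>C. \<forall>y\<in>C. (\<exists>j\<in>\<Gamma>. x j \<noteq> y j) \<longrightarrow> dim_over (Fq q) (*) ((x - y) ` \<Gamma>) \<ge> \<delta>))"

end

theory Submission
  imports Defs "HOL-Computational_Algebra.Primes" "HOL-Library.FuncSet"
begin

text \<open>Every message \<open>f = \<Sum>\<^sub>k g\<^sub>k \<phi>\<^bsub>T\<^sup>R\<^esub>\<^sup>k\<close> acts on the eigenspace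
  \<open>W\<^sub>i = ker (\<phi>\<^bsub>T\<^sup>R\<^esub> - a\<^sub>i)\<close> as the polynomial \<open>\<Sum>\<^sub>k a\<^sub>i\<^sup>k g\<^sub>k\<close> of \<open>\<tau>\<close>-degree \<open>< r\<close>.
  A nonzero \<open>q\<close>-linearized polynomial of \<open>\<tau>\<close>-degree \<open>d\<close> has at most \<open>q\<^sup>d\<close> roots, so its
  values on an \<open>\<bbbF>\<^sub>q\<close>-space of dimension \<open>N\<close> span a space of dimension at least \<open>N - d\<close>.
  On a single block \<open>W\<^sub>i\<close> (dimension \<open>R\<close>) this gives locality, \<open>R - (r - 1) = \<delta>\<close>; on
  \<open>W\<^sub>1 \<oplus> \<dots> \<oplus> W\<^sub>l\<close> (direct, as eigenspaces for distinct eigenvalues) applied to \<open>f\<close> itself,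
  of \<open>\<tau>\<close>-degree \<open>\<le> s R + r - 1\<close>, it gives the distance bound. The same root count on each
  \<open>W\<^sub>i\<close>, together with the \<open>l > s\<close> distinct \<open>a\<^sub>i\<close>, makes the encoding injective, which gives the
  dimension; a pigeonhole argument on the first \<open>s R + r - 1\<close> coordinates, which depend on
  fewer than \<open>(s + 1) r\<close> coefficients, yields a codeword attaining the bound.\<close>

section \<open>Linear algebra over a finite subfield\<close>

locale subfield_module =
  fixes F :: "'s::field set" and sc :: "'s \<Rightarrow> 'v::ab_group_add \<Rightarrow> 'v"
  assumes zero_mem: "0 \<in> F" and one_mem: "1 \<in> F"
    and add_mem: "\<And>a b. a \<in> F \<Longrightarrow> b \<in> F \<Longrightarrow> a + b \<in> F"
    and uminus_mem: "\<And>a. a \<in> F \<Longrightarrow> - a \<in> F"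
    and mult_mem: "\<And>a b. a \<in> F \<Longrightarrow> b \<in> F \<Longrightarrow> a * b \<in> F"
    and inverse_mem: "\<And>a. a \<in> F \<Longrightarrow> inverse a \<in> F"
    and finite_F: "finite F"
    and sc_add_right: "\<And>c x y. sc c (x + y) = sc c x + sc c y"
    and sc_add_left: "\<And>c d x. sc (c + d) x = sc c x + sc d x"
    and sc_mult: "\<And>c d x. sc (c * d) x = sc c (sc d x)"
    and sc_one: "\<And>x. sc 1 x = x"
begin

lemma diff_mem: "a \<in> F \<Longrightarrow> b \<in> F \<Longrightarrow> a - b \<in> F"
  using add_mem uminus_mem by (metis diff_conv_add_uminus)

lemma sc_zero_left [simp]: "sc 0 x = 0"
  using sc_add_left[of 0 0 x] by simp

lemma sc_zero_right [simp]: "sc c 0 = 0"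
  using sc_add_right[of c 0 0] by simp

lemma sc_minus_left: "sc (- c) x = - sc c x"
  using sc_add_left[of c "-c" x] by (simp add: eq_neg_iff_add_eq_0 add.commute)

lemma sc_diff_left: "sc (c - d) x = sc c x - sc d x"
  using sc_add_left[of c "-d" x] sc_minus_left by simp

lemma card_F_ge_2: "card F \<ge> 2"
proof -
  have "card {0::'s, 1} \<le> card F"
    using zero_mem one_mem finite_F by (intro card_mono) auto
  then show ?thesis by simp
qed

definition lin_span :: "'v list \<Rightarrow> 'v set" where
  "lin_span vs = (\<lambda>cs. sum_list (map2 sc cs vs)) ` {cs. set cs \<subseteq> F \<and> length cs = length vs}"

lemma span_over_zero: "0 \<in> span_over F sc S"
  unfolding span_over_def by (auto intro!: exI[of _ "[]"])

lemma span_over_add: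
  assumes "x \<in> span_over F sc S" "y \<in> span_over F sc S"
  shows "x + y \<in> span_over F sc S"
proof -
  obtain cs vs where x: "x = sum_list (map2 sc cs vs)" "length cs = length vs" "set cs \<subseteq> F" "set vs \<subseteq> S"
    using assms(1) unfolding span_over_def by blast
  obtain cs' vs' where y: "y = sum_list (map2 sc cs' vs')" "length cs' = length vs'" "set cs' \<subseteq> F" "set vs' \<subseteq> S"
    using assms(2) unfolding span_over_def by blast
  show ?thesis unfolding span_over_def
    by (intro CollectI exI[of _ "cs @ cs'"] exI[of _ "vs @ vs'"]) (use x y in \<open>auto simp: zip_append\<close>)
qed

lemma sum_list_map2_scale:
  "length cs = length vs \<Longrightarrow> sum_list (map2 sc (map ((*) c) cs) vs) = sc c (sum_list (map2 sc cs vs))"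
  by (induction cs vs rule: list_induct2) (auto simp: sc_mult sc_add_right)

lemma sum_list_map2_add:
  "length cs = length cs' \<Longrightarrow> length cs' = length vs \<Longrightarrow>
    sum_list (map2 sc (map2 (+) cs cs') vs) = sum_list (map2 sc cs vs) + sum_list (map2 sc cs' vs)"
  by (induction cs cs' vs rule: list_induct3) (auto simp: sc_add_left)

lemma sum_list_map2_diff:
  "length cs = length cs' \<Longrightarrow> length cs' = length vs \<Longrightarrow>
    sum_list (map2 sc (map2 (-) cs cs') vs) = sum_list (map2 sc cs vs) - sum_list (map2 sc cs' vs)"
  by (induction cs cs' vs rule: list_induct3) (auto simp: sc_diff_left)

lemma span_over_scale:
  assumes "c \<in> F" "x \<in> span_over F sc S"
  shows "sc c x \<in> span_over F sc S"
proof -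
  obtain cs vs where x: "x = sum_list (map2 sc cs vs)" "length cs = length vs" "set cs \<subseteq> F" "set vs \<subseteq> S"
    using assms(2) unfolding span_over_def by blast
  show ?thesis unfolding span_over_def
    by (intro CollectI exI[of _ "map ((*) c) cs"] exI[of _ vs])
      (use x assms(1) in \<open>auto simp: sum_list_map2_scale mult_mem\<close>)
qed

lemma span_over_diff:
  assumes "x \<in> span_over F sc S" "y \<in> span_over F sc S"
  shows "x - y \<in> span_over F sc S"
  using span_over_add[OF assms(1) span_over_scale[OF uminus_mem[OF one_mem] assms(2)]]
  by (simp add: sc_minus_left sc_one)

lemma span_over_superset: "x \<in> S \<Longrightarrow> x \<in> span_over F sc S"
  unfolding span_over_def
  by (rule CollectI, rule exI[of _ "[1]"], rule exI[of _ "[x]"]) (auto simp: one_mem sc_one)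

lemma span_over_minimal:
  assumes "S \<subseteq> T" "0 \<in> T" "\<And>x y. x \<in> T \<Longrightarrow> y \<in> T \<Longrightarrow> x + y \<in> T"
    "\<And>c x. c \<in> F \<Longrightarrow> x \<in> T \<Longrightarrow> sc c x \<in> T"
  shows "span_over F sc S \<subseteq> T"
proof
  fix x assume "x \<in> span_over F sc S"
  then obtain cs vs where x: "x = sum_list (map2 sc cs vs)" "length cs = length vs" "set cs \<subseteq> F" "set vs \<subseteq> S"
    unfolding span_over_def by blast
  have "sum_list (map2 sc cs vs) \<in> T" using x(2-4)
    by (induction cs vs rule: list_induct2) (use assms in auto)
  then show "x \<in> T" using x by simp
qed

lemma span_over_mono: "S \<subseteq> S' \<Longrightarrow> span_over F sc S \<subseteq> span_over F sc S'"
  by (rule span_over_minimal) (auto intro: span_over_superset span_over_zero span_over_add span_over_scale)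

lemma span_over_subspace: "subspace_over F sc U \<Longrightarrow> span_over F sc U = U"
  unfolding subspace_over_def
  by (rule antisym, rule span_over_minimal) (auto intro: span_over_superset)

lemma span_over_Un:
  "span_over F sc (X \<union> Y) = {u + w | u w. u \<in> span_over F sc X \<and> w \<in> span_over F sc Y}"
    (is "_ = ?sum")
proof
  show "?sum \<subseteq> span_over F sc (X \<union> Y)"
    using span_over_mono[of X "X \<union> Y"] span_over_mono[of Y "X \<union> Y"] span_over_add by blast
  show "span_over F sc (X \<union> Y) \<subseteq> ?sum"
  proof (rule span_over_minimal)
    show "X \<union> Y \<subseteq> ?sum"
    proof
      fix z assume "z \<in> X \<union> Y"
      then have "z = z + 0 \<and> z \<in> span_over F sc X \<and> 0 \<in> span_over F sc Y \<or>
          z = 0 + z \<and> 0 \<in> span_over F sc X \<and> z \<in> span_over F sc Y"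
        using span_over_superset span_over_zero by auto
      then show "z \<in> ?sum" by blast
    qed
    show "0 \<in> ?sum" using span_over_zero by force
  next
    fix z z' assume "z \<in> ?sum" "z' \<in> ?sum"
    then obtain u w u' w' where "z = u + w" "z' = u' + w'"
      "u \<in> span_over F sc X" "w \<in> span_over F sc Y" "u' \<in> span_over F sc X" "w' \<in> span_over F sc Y"
      by blast
    moreover have "u + w + (u' + w') = (u + u') + (w + w')" by (simp add: algebra_simps)
    ultimately show "z + z' \<in> ?sum" using span_over_add by blast
  next
    fix c z assume "c \<in> F" "z \<in> ?sum"
    then show "sc c z \<in> ?sum" using span_over_scale sc_add_right by blast
  qed
qed

lemma sum_list_map2_nth:
  "length cs = length vs \<Longrightarrow> sum_list (map2 sc cs vs) = (\<Sum>j<length vs. sc (cs ! j) (vs ! j))"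
  by (simp add: sum_list_sum_nth atLeast0LessThan)

lemma set_subset_lin_span: "set vs \<subseteq> lin_span vs"
proof
  fix v assume "v \<in> set vs"
  then obtain i where i: "i < length vs" "vs ! i = v" by (auto simp: in_set_conv_nth)
  define cs where "cs = map (\<lambda>j. if j = i then 1 else 0 :: 's) [0..<length vs]"
  have "sum_list (map2 sc cs vs) = (\<Sum>j<length vs. sc (if j = i then 1 else 0) (vs ! j))"
    unfolding cs_def by (subst sum_list_map2_nth) auto
  also have "\<dots> = (\<Sum>j<length vs. if j = i then vs ! j else 0)"
    by (intro sum.cong) (auto simp: sc_one)
  also have "\<dots> = v" using i by simp
  finally show "v \<in> lin_span vs"
    unfolding lin_span_def using zero_mem one_mem by (auto simp: cs_def intro!: image_eqI[of _ _ cs])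
qed

lemma span_over_set: "span_over F sc (set vs) = lin_span vs"
proof
  show "lin_span vs \<subseteq> span_over F sc (set vs)"
    unfolding lin_span_def span_over_def by auto
  show "span_over F sc (set vs) \<subseteq> lin_span vs"
  proof (rule span_over_minimal[OF set_subset_lin_span])
    show "0 \<in> lin_span vs"
      unfolding lin_span_def using zero_mem
      by (auto intro!: image_eqI[of _ _ "replicate (length vs) 0"] simp: sum_list_map2_nth)
  next
    fix x y assume "x \<in> lin_span vs" "y \<in> lin_span vs"
    then obtain cs cs' where "x = sum_list (map2 sc cs vs)" "set cs \<subseteq> F" "length cs = length vs"
      "y = sum_list (map2 sc cs' vs)" "set cs' \<subseteq> F" "length cs' = length vs"
      unfolding lin_span_def by blast
    then show "x + y \<in> lin_span vs" unfolding lin_span_def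
      by (auto simp: sum_list_map2_add set_zip intro!: image_eqI[of _ _ "map2 (+) cs cs'"] add_mem)
          (metis nth_mem subsetD)+
  next
    fix c x assume "c \<in> F" "x \<in> lin_span vs"
    then show "sc c x \<in> lin_span vs" unfolding lin_span_def
      by (auto simp: sum_list_map2_scale intro!: image_eqI[of _ _ "map ((*) c) _"] mult_mem)
  qed
qed

lemma finite_lin_span: "finite (lin_span vs)"
  unfolding lin_span_def using finite_F by (simp add: finite_lists_length_eq)

lemma card_lin_span_le: "card (lin_span vs) \<le> card F ^ length vs"
proof -
  have "card (lin_span vs) \<le> card {cs. set cs \<subseteq> F \<and> length cs = length vs}"
    unfolding lin_span_def by (rule card_image_le) (simp add: finite_F finite_lists_length_eq)
  then show ?thesis by (simp add: card_lists_length_eq finite_F)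
qed

lemma card_lin_span:
  assumes "indep_over F sc vs"
  shows "card (lin_span vs) = card F ^ length vs"
proof -
  let ?L = "{cs. set cs \<subseteq> F \<and> length cs = length vs}"
  have "inj_on (\<lambda>cs. sum_list (map2 sc cs vs)) ?L"
  proof (rule inj_onI)
    fix cs cs' assume cs: "cs \<in> ?L" "cs' \<in> ?L"
      and eq: "sum_list (map2 sc cs vs) = sum_list (map2 sc cs' vs)"
    have "set (map2 (-) cs cs') \<subseteq> F" using cs
      by (fastforce simp: set_zip intro!: diff_mem intro: subsetD[OF _ nth_mem])
    moreover have "sum_list (map2 sc (map2 (-) cs cs') vs) = 0"
      using cs eq by (simp add: sum_list_map2_diff)
    moreover have "length (map2 (-) cs cs') = length vs" using cs by simp
    ultimately have "set (map2 (-) cs cs') \<subseteq> {0}"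
      using assms unfolding indep_over_def by blast
    then have "cs ! j = cs' ! j" if "j < length vs" for j
      using that cs by (auto simp: set_conv_nth)
    then show "cs = cs'" using cs by (simp add: nth_equalityI)
  qed
  then have "card (lin_span vs) = card ?L" unfolding lin_span_def by (rule card_image)
  then show ?thesis by (simp add: card_lists_length_eq finite_F)
qed

lemma indep_over_Cons:
  assumes indep: "indep_over F sc vs" and w: "w \<notin> span_over F sc (set vs)"
  shows "indep_over F sc (w # vs)"
  unfolding indep_over_def
proof (intro allI impI)
  fix cs assume cs: "length cs = length (w # vs) \<and> set cs \<subseteq> F \<and> sum_list (map2 sc cs (w # vs)) = 0"
  then obtain c cs' where cs_eq: "cs = c # cs'" by (cases cs) auto
  have c: "c \<in> F" and cs': "length cs' = length vs" "set cs' \<subseteq> F" using cs cs_eq by auto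
  have sum: "sc c w + sum_list (map2 sc cs' vs) = 0" using cs cs_eq by simp
  have "c = 0"
  proof (rule ccontr)
    assume "c \<noteq> 0"
    have "sum_list (map2 sc cs' vs) \<in> span_over F sc (set vs)"
      using cs' unfolding span_over_def by auto
    then have "sc (- inverse c) (sum_list (map2 sc cs' vs)) \<in> span_over F sc (set vs)"
      using c by (intro span_over_scale uminus_mem inverse_mem)
    moreover have "sc (- inverse c) (sum_list (map2 sc cs' vs)) = w"
    proof -
      have "sum_list (map2 sc cs' vs) = sc (- c) w"
        using sum by (simp add: sc_minus_left eq_neg_iff_add_eq_0 add.commute)
      then show ?thesis using \<open>c \<noteq> 0\<close> by (simp flip: sc_mult add: sc_one)
    qed
    ultimately show False using w by simp
  qed
  then have "set cs' \<subseteq> {0}" using indep cs' sum unfolding indep_over_def by auto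
  then show "set cs \<subseteq> {0}" using \<open>c = 0\<close> cs_eq by auto
qed

lemma span_over_eq:
  assumes "T \<subseteq> S" "S \<subseteq> span_over F sc T"
  shows "span_over F sc S = span_over F sc T"
  using span_over_mono[OF assms(1)] span_over_minimal[OF assms(2)]
  by (auto intro: span_over_zero span_over_add span_over_scale)

lemma card_power_length_le_card_span:
  assumes "indep_over F sc vs" "set vs \<subseteq> S" "finite (span_over F sc S)"
  shows "card F ^ length vs \<le> card (span_over F sc S)"
proof -
  have "lin_span vs \<subseteq> span_over F sc S"
    using span_over_mono[OF assms(2)] by (simp add: span_over_set)
  then show ?thesis using card_lin_span[OF assms(1)] assms(3) by (metis card_mono)
qed

lemma card_span_over_eq_power_dim:
  assumes fin: "finite (span_over F sc S)"
  shows "card (span_over F sc S) = card F ^ dim_over F sc S"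
proof -
  define P where "P d \<longleftrightarrow> (\<exists>vs. length vs = d \<and> set vs \<subseteq> S \<and> indep_over F sc vs)" for d
  have bound: "d \<le> card (span_over F sc S)" if "P d" for d
  proof -
    have "d < 2 ^ d" by (rule less_exp)
    also have "\<dots> \<le> card F ^ d" using card_F_ge_2 by (simp add: power_mono)
    also have "\<dots> \<le> card (span_over F sc S)"
      using \<open>P d\<close> card_power_length_le_card_span fin unfolding P_def by blast
    finally show ?thesis by simp
  qed
  have "P 0" unfolding P_def indep_over_def by auto
  have dim: "dim_over F sc S = Greatest P" unfolding dim_over_def P_def by simp
  have "P (Greatest P)" using GreatestI_nat[of P 0] \<open>P 0\<close> bound by blast
  then obtain vs where vs: "length vs = dim_over F sc S" "set vs \<subseteq> S" "indep_over F sc vs"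
    unfolding P_def dim by blast
  have "S \<subseteq> span_over F sc (set vs)"
  proof
    fix w assume "w \<in> S"
    show "w \<in> span_over F sc (set vs)"
    proof (rule ccontr)
      assume "w \<notin> span_over F sc (set vs)"
      then have "P (Suc (length vs))"
        unfolding P_def using indep_over_Cons[OF vs(3)] vs(2) \<open>w \<in> S\<close>
        by (intro exI[of _ "w # vs"]) auto
      then show False using Greatest_le_nat[of P _ "card (span_over F sc S)"] bound vs(1) dim by fastforce
    qed
  qed
  then have "span_over F sc S = lin_span vs"
    using span_over_eq[OF vs(2)] by (simp add: span_over_set)
  then show ?thesis using card_lin_span[OF vs(3)] vs(1) by simp
qed

lemma dim_over_le_card:
  assumes "finite S"
  shows "dim_over F sc S \<le> card (S - {0})"
proof -
  obtain vs where vs: "set vs = S - {0}" "distinct vs"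
    using finite_distinct_list[of "S - {0}"] assms by blast
  have "S \<subseteq> span_over F sc (set vs)"
    using vs span_over_superset span_over_zero by blast
  then have span: "span_over F sc S = lin_span vs"
    using span_over_eq[of "set vs" S] vs(1) span_over_set[of vs] by simp
  have "card F ^ dim_over F sc S \<le> card F ^ card (S - {0})"
    using card_span_over_eq_power_dim[of S] card_lin_span_le[of vs] finite_lin_span[of vs]
    by (simp add: span vs distinct_card flip: vs(1))
  then show ?thesis using card_F_ge_2 by (simp add: power_le_imp_le_exp)
qed

end

section \<open>Finite fields\<close>

lemma card_eq_card_image_mult:
  assumes "finite A" "\<And>y. y \<in> f ` A \<Longrightarrow> card {x\<in>A. f x = y} = k"
  shows "card A = card (f ` A) * k"
proof -
  have "card A = card (\<Union>y\<in>f ` A. {x\<in>A. f x = y})"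
    by (intro arg_cong[where f = card]) auto
  also have "\<dots> = (\<Sum>y\<in>f ` A. card {x\<in>A. f x = y})"
    by (rule card_UN_disjoint) (auto simp: assms(1))
  also have "\<dots> = card (f ` A) * k" using assms(2) by simp
  finally show ?thesis .
qed

text \<open>Equivalent to \<open>CHAR_dvd_CARD\<close> of HOL-Number_Theory, whose HOL-Algebra imports would
  shadow \<open>monom\<close> and \<open>coeff\<close> of the polynomial library.\<close>
lemma of_nat_card_UNIV: "of_nat (card (UNIV :: 'a::{finite,ring_1} set)) = (0::'a)"
proof -
  have "(\<Sum>y\<in>(UNIV::'a set). 1 + y) = (\<Sum>y\<in>UNIV. y)"
    by (rule sum.reindex_bij_witness[of _ "\<lambda>y. y - 1" "\<lambda>y. 1 + y"]) auto
  then show ?thesis by (simp add: sum.distrib)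
qed

lemma CHAR_eq_prime:
  assumes "card (UNIV :: 'f::{finite,field} set) = p ^ n" "prime p"
  shows "CHAR('f) = p"
proof -
  have "prime CHAR('f)"
    using prime_CHAR_semidom finite_imp_CHAR_pos by (metis finite_UNIV)
  moreover have "of_nat (p ^ n) = (0::'f)" using of_nat_card_UNIV[where 'a='f] assms(1) by simp
  then have "CHAR('f) dvd p ^ n" by (simp only: of_nat_eq_0_iff_char_dvd)
  ultimately show ?thesis using assms(2) prime_dvd_power primes_dvd_imp_eq by blast
qed

text \<open>The library version \<open>finite_field_power_card_eq_same\<close> requires the type class
  \<open>finite_field\<close>, which a type variable of sort \<open>{finite, field}\<close> does not have.\<close>
lemma power_card_minus_1:
  fixes x :: "'f::{finite,field}"
  assumes "x \<noteq> 0"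
  shows "x ^ (card (UNIV :: 'f set) - 1) = 1"
proof -
  let ?U = "UNIV - {0 :: 'f}"
  have "x ^ card ?U * (\<Prod>y\<in>?U. y) = (\<Prod>y\<in>?U. x * y)"
    by (simp add: prod.distrib)
  also have "\<dots> = (\<Prod>y\<in>?U. y)"
    by (rule prod.reindex_bij_witness[of _ "\<lambda>y. y / x" "\<lambda>y. x * y"]) (use assms in auto)
  finally have "x ^ card ?U = 1" by simp
  then show ?thesis by (simp add: card_Diff_singleton)
qed

lemma card_power_eq_le:
  assumes "n \<ge> 1"
  shows "card {x::'f::field. x ^ n = c} \<le> n"
proof -
  let ?p = "monom (1::'f) n - [:c:]"
  have "degree ?p = n"
    using assms by (simp add: diff_conv_add_uminus degree_add_eq_left degree_monom_eq)
  moreover have "{x. x ^ n = c} = {x. poly ?p x = 0}" by (auto simp: poly_monom)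
  ultimately show ?thesis using card_poly_roots_bound[of ?p] assms by fastforce
qed

lemma card_power_eq_self_le:
  assumes "n \<ge> 2"
  shows "card {x::'f::field. x ^ n = x} \<le> n"
proof -
  let ?p = "monom (1::'f) n + [:0, -1:]"
  have "degree ?p = n" using assms by (simp add: degree_add_eq_left degree_monom_eq)
  moreover have "{x. x ^ n = x} = {x. poly ?p x = 0}" by (auto simp: poly_monom)
  ultimately show ?thesis using card_poly_roots_bound[of ?p] assms by fastforce
qed

lemma card_power_fibre:
  fixes x0 :: "'f::field"
  assumes "x0 \<noteq> 0" "d \<ge> 1"
  shows "card {x. x \<noteq> 0 \<and> x ^ d = x0 ^ d} = card {x::'f. x ^ d = 1}"
proof -
  have "{x. x \<noteq> 0 \<and> x ^ d = x0 ^ d} = (\<lambda>z. x0 * z) ` {x. x ^ d = 1}"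
  proof (intro set_eqI iffI)
    fix x assume "x \<in> {x. x \<noteq> 0 \<and> x ^ d = x0 ^ d}"
    then have "x = x0 * (x / x0)" "(x / x0) ^ d = 1" using assms by (auto simp: power_divide)
    then show "x \<in> (\<lambda>z. x0 * z) ` {x. x ^ d = 1}" by blast
  qed (use assms in \<open>auto simp: power_mult_distrib power_0_left\<close>)
  moreover have "inj_on (\<lambda>z. x0 * z) {x. x ^ d = 1}" using assms by (auto simp: inj_on_def)
  ultimately show ?thesis by (simp add: card_image)
qed

text \<open>The fibres of \<open>x \<mapsto> x ^ d\<close> on the nonzero elements all have as many elements as the
  group of \<open>d\<close>-th roots of unity, and its image consists of \<open>t\<close>-th roots of unity, where
  \<open>d * t\<close> is the order of the multiplicative group.\<close>
lemma card_roots_of_unity_ge: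
  assumes "d dvd card (UNIV :: 'f::{finite,field} set) - 1"
  shows "d \<le> card {x::'f. x ^ d = 1}"
proof -
  define U where "U = UNIV - {0 :: 'f}"
  obtain t where t: "card U = d * t"
    using assms by (auto simp: U_def card_Diff_singleton)
  have "card U > 0" unfolding U_def by (metis card_gt_0_iff finite DiffI UNIV_I empty_iff
      one_neq_zero singletonD)
  then have "d \<ge> 1" "t \<ge> 1" using t by (auto intro: Suc_leI)
  have "card {x\<in>U. x ^ d = y} = card {x::'f. x ^ d = 1}" if "y \<in> (\<lambda>x. x ^ d) ` U" for y
    using that card_power_fibre[OF _ \<open>d \<ge> 1\<close>] by (auto simp: U_def)
  then have "card U = card ((\<lambda>x. x ^ d) ` U) * card {x::'f. x ^ d = 1}"
    by (intro card_eq_card_image_mult) auto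
  moreover have "(x ^ d) ^ t = 1" if "x \<in> U" for x
  proof -
    have "(x ^ d) ^ t = x ^ (card (UNIV :: 'f set) - 1)"
      using t by (simp add: U_def card_Diff_singleton flip: power_mult)
    then show ?thesis using power_card_minus_1 that by (simp add: U_def)
  qed
  then have "(\<lambda>x. x ^ d) ` U \<subseteq> {y. y ^ t = 1}" by auto
  then have "card ((\<lambda>x. x ^ d) ` U) \<le> t"
    using card_power_eq_le[OF \<open>t \<ge> 1\<close>, of "1::'f"] by (meson card_mono finite order_trans)
  ultimately have "d * t \<le> t * card {x::'f. x ^ d = 1}" using t by (metis mult.commute mult_le_mono1)
  then show ?thesis using \<open>t \<ge> 1\<close> by (simp add: mult.commute)
qed

lemma card_Fq_if_card_UNIV:
  assumes "card (UNIV :: 'f::{finite,field} set) = q ^ m" "m \<ge> 1" "q \<ge> 2"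
  shows "card (Fq q :: 'f set) = q"
proof -
  have "int (q ^ m - 1) = int (q - 1) * (\<Sum>i<m. int q ^ i)"
    using assms(3) power_diff_1_eq[of "int q" m] by (simp add: of_nat_diff)
  then have "q - 1 dvd q ^ m - 1" by (metis dvd_triv_left int_dvd_int_iff)
  then have "q - 1 \<le> card {x::'f. x ^ (q - 1) = 1}"
    using assms(1) card_roots_of_unity_ge by metis
  moreover have "Fq q = insert 0 {x::'f. x ^ (q - 1) = 1}"
    using assms(3) by (auto simp: Fq_def power_eq_if[of _ q] split: if_splits)
  ultimately have "q \<le> card (Fq q :: 'f set)" using assms(3) by (simp add: power_0_left)
  moreover have "card (Fq q :: 'f set) \<le> q"
    unfolding Fq_def by (rule card_power_eq_self_le[OF assms(3)])
  ultimately show ?thesis by simp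
qed

section \<open>The field with \<open>q ^ m\<close> elements and its \<open>q\<close>-linearized polynomials\<close>

locale Fqm_field =
  fixes q m :: nat and ty :: "'f::{finite,field} itself"
  assumes prime_power: "\<exists>p e. prime p \<and> e > 0 \<and> q = p ^ e"
    and card_UNIV: "card (UNIV :: 'f set) = q ^ m"
begin

lemma q_ge_2: "q \<ge> 2"
  using prime_power by (metis One_nat_def Suc_1 Suc_leI one_less_power prime_gt_1_nat)

lemma m_ge_1: "m \<ge> 1"
proof (rule ccontr)
  assume "\<not> m \<ge> 1"
  then have "card (UNIV :: 'f set) = 1" using card_UNIV by simp
  moreover have "card {0::'f, 1} \<le> card (UNIV :: 'f set)" by (rule card_mono) auto
  ultimately show False by simp
qed

lemma q_power_eq_CHAR_power: "\<exists>e. q ^ i = CHAR('f) ^ e"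
proof -
  obtain p e where pe: "prime p" "e > 0" "q = p ^ e" using prime_power by blast
  then have "CHAR('f) = p" using CHAR_eq_prime[of p "e * m"] card_UNIV by (simp add: power_mult)
  then show ?thesis using pe by (auto simp flip: power_mult)
qed

lemma prime_CHAR: "prime CHAR('f)"
  using CHAR_eq_prime prime_power card_UNIV by (metis power_mult)

lemma frobenius_add: "(x + y :: 'f) ^ (q ^ i) = x ^ (q ^ i) + y ^ (q ^ i)"
  using q_power_eq_CHAR_power[of i] freshmans_dream'[OF prime_CHAR] by metis

lemma frobenius_sum: "(\<Sum>j\<in>A. g j :: 'f) ^ (q ^ i) = (\<Sum>j\<in>A. g j ^ (q ^ i))"
  using q_power_eq_CHAR_power[of i] freshmans_dream_sum'[OF prime_CHAR] by metis

lemma frobenius_uminus: "(- x :: 'f) ^ (q ^ i) = - (x ^ (q ^ i))"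
proof -
  have "x ^ (q ^ i) + (- x) ^ (q ^ i) = 0"
    using frobenius_add[of x "- x" i] q_ge_2 by (simp add: power_0_left)
  then show ?thesis by (simp add: eq_neg_iff_add_eq_0 add.commute)
qed

lemma Fq_power_q_power: "c \<in> (Fq q :: 'f set) \<Longrightarrow> c ^ (q ^ i) = c"
  by (induction i) (simp_all add: Fq_def power_mult mult.commute[of q])

lemma Fq_add: "a \<in> Fq q \<Longrightarrow> b \<in> Fq q \<Longrightarrow> (a + b :: 'f) \<in> Fq q"
  using frobenius_add[of a b 1] by (simp add: Fq_def)

lemma Fq_uminus: "a \<in> Fq q \<Longrightarrow> (- a :: 'f) \<in> Fq q"
  using frobenius_uminus[of a 1] by (simp add: Fq_def)

lemma Fq_diff: "a \<in> Fq q \<Longrightarrow> b \<in> Fq q \<Longrightarrow> (a - b :: 'f) \<in> Fq q"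
  using Fq_add Fq_uminus by (metis diff_conv_add_uminus)

lemma Fq_mult: "a \<in> Fq q \<Longrightarrow> b \<in> Fq q \<Longrightarrow> (a * b :: 'f) \<in> Fq q"
  by (simp add: Fq_def power_mult_distrib)

lemma Fq_zero: "(0::'f) \<in> Fq q"
  using q_ge_2 by (simp add: Fq_def)

lemma Fq_one: "(1::'f) \<in> Fq q"
  by (simp add: Fq_def)

lemma Fq_inverse: "a \<in> Fq q \<Longrightarrow> (inverse a :: 'f) \<in> Fq q"
  by (simp add: Fq_def power_inverse)

lemma Fq_power: "a \<in> Fq q \<Longrightarrow> (a ^ k :: 'f) \<in> Fq q"
  by (induction k) (simp_all add: Fq_one Fq_mult)

lemma Fq_prod: "(\<And>j. j \<in> A \<Longrightarrow> g j \<in> Fq q) \<Longrightarrow> (\<Prod>j\<in>A. g j :: 'f) \<in> Fq q"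
  by (induction A rule: infinite_finite_induct) (auto simp: Fq_one Fq_mult)

lemma card_Fq: "card (Fq q :: 'f set) = q"
  using card_Fq_if_card_UNIV card_UNIV m_ge_1 q_ge_2 by blast

sublocale lin: subfield_module "Fq q :: 'f set" "(*)"
  by unfold_locales (auto simp: Fq_zero Fq_one Fq_add Fq_uminus Fq_mult Fq_inverse algebra_simps)

sublocale vec: subfield_module "Fq q :: 'f set" "vscale :: 'f \<Rightarrow> (nat \<Rightarrow> 'f) \<Rightarrow> (nat \<Rightarrow> 'f)"
  by unfold_locales
    (auto simp: Fq_zero Fq_one Fq_add Fq_uminus Fq_mult Fq_inverse vscale_def fun_eq_iff algebra_simps)

lemma teval_eq_sum_le:
  fixes f :: "'f poly"
  assumes "degree f \<le> N"
  shows "teval q f x = (\<Sum>i\<le>N. coeff f i * x ^ (q ^ i))"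
  unfolding teval_def
  by (rule sum.mono_neutral_left) (use assms in \<open>auto simp: coeff_eq_0\<close>)

lemma teval_0 [simp]:
  fixes f g :: "'f poly"
  shows "teval q 0 x = 0"
  by (simp add: teval_def)

lemma teval_add:
  fixes f g :: "'f poly"
  shows "teval q (f + g) x = teval q f x + teval q g x"
proof -
  define N where "N = max (degree f) (degree g)"
  have "degree (f + g) \<le> N" "degree f \<le> N" "degree g \<le> N"
    unfolding N_def by (auto intro: degree_add_le)
  then show ?thesis by (simp add: teval_eq_sum_le[of _ N] algebra_simps sum.distrib)
qed

lemma teval_smult:
  fixes f g :: "'f poly"
  shows "teval q (smult c f) x = c * teval q f x"
  using teval_eq_sum_le[of "smult c f" "degree f"] teval_eq_sum_le[of f "degree f"]
  by (simp add: sum_distrib_left mult.assoc)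

lemma teval_diff:
  fixes f g :: "'f poly"
  shows "teval q (f - g) x = teval q f x - teval q g x"
  using teval_add[of f "- g"] teval_smult[of "- 1" g] by simp

lemma teval_sum:
  fixes g :: "'b \<Rightarrow> 'f poly"
  shows "teval q (\<Sum>j\<in>A. g j) x = (\<Sum>j\<in>A. teval q (g j) x)"
  by (induction A rule: infinite_finite_induct) (auto simp: teval_add)

lemma teval_monom:
  fixes c :: 'f
  shows "teval q (monom c n) x = c * x ^ (q ^ n)"
proof -
  have "teval q (monom c n) x = (\<Sum>i\<le>n. coeff (monom c n) i * x ^ (q ^ i))"
    by (rule teval_eq_sum_le) (simp add: degree_monom_le)
  also have "\<dots> = (\<Sum>i\<in>{n}. coeff (monom c n) i * x ^ (q ^ i))"
    by (rule sum.mono_neutral_right) (auto simp: coeff_monom)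
  finally show ?thesis by (simp add: coeff_monom)
qed

lemma teval_const:
  fixes c :: 'f
  shows "teval q [:c:] x = c * x"
  by (simp add: teval_def)

text \<open>Evaluation is \<open>\<bbbF>\<^sub>q\<close>-linear in the point because \<open>x \<mapsto> x ^ q\<close> is additive
  and fixes \<open>\<bbbF>\<^sub>q\<close>.\<close>

lemma teval_add_point:
  fixes f g :: "'f poly"
  shows "teval q f (x + y) = teval q f x + teval q f y"
  unfolding teval_def by (simp only: frobenius_add distrib_left sum.distrib)

lemma teval_zero_point [simp]:
  fixes f g :: "'f poly"
  shows "teval q f 0 = 0"
  unfolding teval_def using q_ge_2 by (simp add: power_0_left)

lemma teval_diff_point:
  fixes f g :: "'f poly"
  shows "teval q f (x - y) = teval q f x - teval q f y"
  using teval_add_point[of f "x - y" y] by simp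

lemma teval_scale_point:
  fixes f g :: "'f poly"
  shows "c \<in> Fq q \<Longrightarrow> teval q f (c * x) = c * teval q f x"
  unfolding teval_def
  by (simp add: Fq_power_q_power power_mult_distrib sum_distrib_left mult.left_commute)

lemma teval_tmult:
  fixes f g :: "'f poly"
  shows "teval q (tmult q f g) x = teval q f (teval q g x)"
proof -
  have "teval q (tmult q f g) x =
      (\<Sum>i\<le>degree f. \<Sum>j\<le>degree g. coeff f i * coeff g j ^ (q ^ i) * x ^ (q ^ (i + j)))"
    unfolding tmult_def by (simp add: teval_sum teval_monom)
  also have "\<dots> = (\<Sum>i\<le>degree f. coeff f i * (\<Sum>j\<le>degree g. coeff g j * x ^ (q ^ j)) ^ (q ^ i))"
  proof (intro sum.cong refl)
    fix i
    have "(x ^ (q ^ j)) ^ (q ^ i) = x ^ (q ^ (i + j))" for j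
      by (simp add: power_add mult.commute flip: power_mult)
    then show "(\<Sum>j\<le>degree g. coeff f i * coeff g j ^ (q ^ i) * x ^ (q ^ (i + j))) =
        coeff f i * (\<Sum>j\<le>degree g. coeff g j * x ^ (q ^ j)) ^ (q ^ i)"
      by (simp add: frobenius_sum sum_distrib_left power_mult_distrib mult.assoc)
  qed
  finally show ?thesis by (simp add: teval_def)
qed

lemma teval_tpow:
  fixes f g :: "'f poly"
  shows "teval q (tpow q f k) x = (teval q f ^^ k) x"
  by (induction k) (simp_all add: teval_tmult, simp add: teval_def)

lemma degree_tmult_le:
  fixes f g :: "'f poly"
  shows "degree (tmult q f g) \<le> degree f + degree g"
  unfolding tmult_def by (intro degree_sum_le order.trans[OF degree_monom_le]) auto

lemma degree_tpow_le:
  fixes f g :: "'f poly"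
  shows "degree (tpow q f k) \<le> k * degree f"
  by (induction k) (auto intro: order.trans[OF degree_tmult_le])

text \<open>The roots of \<open>f\<close> are those of the ordinary polynomial \<open>\<Sum>\<^sub>i f\<^sub>i X\<^bsup>q\<^sup>i\<^esup>\<close>.\<close>
lemma card_teval_roots_le:
  fixes f :: "'f poly"
  assumes "f \<noteq> 0"
  shows "card {x. teval q f x = 0} \<le> q ^ degree f"
proof -
  define p where "p = (\<Sum>i\<le>degree f. monom (coeff f i) (q ^ i))"
  have "coeff p (q ^ degree f) = (\<Sum>i\<le>degree f. if i = degree f then coeff f i else 0)"
    unfolding p_def coeff_sum coeff_monom using q_ge_2 by (intro sum.cong) (auto simp: power_inject_exp)
  then have "p \<noteq> 0" using assms by auto
  moreover have "degree p \<le> q ^ degree f"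
    unfolding p_def using q_ge_2
    by (intro degree_sum_le order.trans[OF degree_monom_le]) (auto intro: power_increasing)
  moreover have "poly p x = teval q f x" for x
    by (simp add: p_def teval_def poly_sum poly_monom)
  ultimately show ?thesis using card_poly_roots_bound[of p] by simp
qed

lemma span_over_image_teval:
  fixes f :: "'f poly"
  shows "span_over (Fq q) (*) (teval q f ` S) = teval q f ` span_over (Fq q) (*) S"
proof (intro equalityI subsetI)
  have map2: "sum_list (map2 (*) cs (map (teval q f) vs)) = teval q f (sum_list (map2 (*) cs vs))"
    if "length cs = length vs" "set cs \<subseteq> Fq q" for cs vs
    using that by (induction cs vs rule: list_induct2) (auto simp: teval_add_point teval_scale_point)
  {
    fix y assume "y \<in> span_over (Fq q) (*) (teval q f ` S)"
    then obtain cs ws where ws: "y = sum_list (map2 (*) cs ws)" "length cs = length ws"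
      "set cs \<subseteq> Fq q" "set ws \<subseteq> teval q f ` S"
      unfolding span_over_def by blast
    then have "ws \<in> lists (teval q f ` S)" by auto
    then obtain vs where "vs \<in> lists S" "ws = map (teval q f) vs"
      unfolding lists_image by blast
    then show "y \<in> teval q f ` span_over (Fq q) (*) S"
      using map2 ws unfolding span_over_def by force
  next
    fix y assume "y \<in> teval q f ` span_over (Fq q) (*) S"
    then obtain cs vs where "y = teval q f (sum_list (map2 (*) cs vs))" "length cs = length vs"
      "set cs \<subseteq> Fq q" "set vs \<subseteq> S"
      unfolding span_over_def by blast
    then show "y \<in> span_over (Fq q) (*) (teval q f ` S)"
      using map2 unfolding span_over_def
      by (intro CollectI exI[of _ cs] exI[of _ "map (teval q f) vs"]) auto
  }
qed

text \<open>A nonzero \<open>f\<close> has at most \<open>q ^ degree f\<close> roots, so on a space of \<open>q ^ N\<close> elements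
  its kernel has dimension at most \<open>degree f\<close>.\<close>
lemma dim_over_image_teval_ge:
  fixes f :: "'f poly"
  assumes "f \<noteq> 0" "card (span_over (Fq q) (*) S) \<ge> q ^ N"
  shows "dim_over (Fq q) (*) (teval q f ` S) + degree f \<ge> N"
proof -
  let ?U = "span_over (Fq q) (*) S"
  let ?K = "{x\<in>?U. teval q f x = 0}"
  have fibre: "card {x\<in>?U. teval q f x = y} = card ?K" if y: "y \<in> teval q f ` ?U" for y
  proof -
    obtain x0 where x0: "x0 \<in> ?U" "y = teval q f x0" using y by blast
    have "{x\<in>?U. teval q f x = y} = (\<lambda>z. x0 + z) ` ?K"
    proof (intro set_eqI iffI)
      fix x assume "x \<in> {x\<in>?U. teval q f x = y}"
      then have "x - x0 \<in> ?K" "x = x0 + (x - x0)"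
        using x0 by (auto simp: teval_diff_point intro: lin.span_over_diff)
      then show "x \<in> (\<lambda>z. x0 + z) ` ?K" by blast
    qed (use x0 lin.span_over_add in \<open>auto simp: teval_add_point\<close>)
    then show ?thesis by (simp add: card_image)
  qed
  have "card ?K \<le> q ^ degree f"
    using card_teval_roots_le[OF assms(1)] card_mono[of "{x. teval q f x = 0}" ?K] by fastforce
  have "q ^ N \<le> card ?U" by (rule assms(2))
  also have "\<dots> = card (teval q f ` ?U) * card ?K"
    by (rule card_eq_card_image_mult) (use fibre in auto)
  also have "\<dots> \<le> q ^ dim_over (Fq q) (*) (teval q f ` S) * q ^ degree f"
    using lin.card_span_over_eq_power_dim[of "teval q f ` S"] card_Fq \<open>card ?K \<le> _\<close>
    by (simp add: span_over_image_teval)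
  finally have "q ^ N \<le> q ^ (dim_over (Fq q) (*) (teval q f ` S) + degree f)"
    by (simp add: power_add)
  then show ?thesis using q_ge_2 by (simp add: power_le_imp_le_exp)
qed

end

section \<open>The Drinfeld module \<open>\<phi>\<^sub>T = \<alpha> + \<tau>\<close>\<close>

lemma drinfeld_monom_one: "drinfeld q \<alpha> (monom 1 n) = tpow q [:\<alpha>, 1:] n"
proof -
  have "drinfeld q \<alpha> (monom 1 n) = (\<Sum>i\<le>n. if i = n then tpow q [:\<alpha>, 1:] i else 0)"
    unfolding drinfeld_def by (intro sum.cong) (auto simp: coeff_monom degree_monom_eq)
  then show ?thesis by simp
qed

lemma drinfeld_monom_one_minus_const:
  assumes "n \<ge> 1"
  shows "drinfeld q \<alpha> (monom 1 n - [:c:]) = tpow q [:\<alpha>, 1:] n - [:c:]"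
proof -
  have "degree (monom 1 n - [:c:]) = n"
    using assms by (simp add: diff_conv_add_uminus degree_add_eq_left degree_monom_eq)
  then have "drinfeld q \<alpha> (monom 1 n - [:c:]) =
      (\<Sum>i\<le>n. (if i = n then tpow q [:\<alpha>, 1:] i else 0) - (if i = 0 then smult c (tpow q [:\<alpha>, 1:] i) else 0))"
    unfolding drinfeld_def
    using assms by (intro sum.cong refl) (auto simp: coeff_monom smult_diff_left coeff_pCons')
  then show ?thesis by (simp add: sum_subtractf)
qed

section \<open>The code\<close>

text \<open>Message polynomials are encoded through their coefficient arrays \<open>c (k, j)\<close>, the
  coefficient of \<open>\<tau>\<^sup>j\<close> in \<open>g\<^sub>k\<close>; coordinate \<open>n\<close> of a codeword is the evaluation at
  \<open>\<beta>\<^sup>(\<^sup>i\<^sup>)\<^sub>j\<close> with \<open>i = n div R + 1\<close> and \<open>j = n mod R + 1\<close>.\<close>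

locale drinfeld_code = Fqm_field q m ty for q m :: nat and ty :: "'f::{finite,field} itself" +
  fixes r \<delta> l s R :: nat and a :: "nat \<Rightarrow> 'f" and \<alpha> :: 'f and \<beta> :: "nat \<Rightarrow> nat \<Rightarrow> 'f"
  assumes r_ge_1: "r \<ge> 1" and \<delta>_ge_2: "\<delta> \<ge> 2" and s_less_l: "s + 1 \<le> l"
    and R_eq: "R = r + \<delta> - 1"
    and a_Fq: "\<And>i. i \<in> {1..l} \<Longrightarrow> a i \<in> Fq q"
    and inj_a: "inj_on a {1..l}"
    and \<beta>_basis: "\<forall>i\<in>{1..l}. indep_over (Fq q) (*) (map (\<beta> i) [1..<R+1]) \<and>
        span_over (Fq q) (*) (\<beta> i ` {1..R}) = torsion q \<alpha> (monom 1 R - [:a i:])"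
begin

lemma R_ge_1: "R \<ge> 1" using R_eq r_ge_1 \<delta>_ge_2 by simp

lemma r_minus_1_less_R: "r - 1 < R" using R_eq r_ge_1 \<delta>_ge_2 by simp

definition phiTR :: "'f poly" where "phiTR = drinfeld q \<alpha> (monom 1 R)"

abbreviation Phi :: "'f \<Rightarrow> 'f" where "Phi \<equiv> teval q phiTR"

definition W :: "nat \<Rightarrow> 'f set" where "W i = torsion q \<alpha> (monom 1 R - [:a i:])"

definition B :: "nat \<Rightarrow> 'f set" where "B i = \<beta> i ` {1..R}"

definition tpoly :: "(nat \<Rightarrow> 'f) \<Rightarrow> 'f poly" where "tpoly d = (\<Sum>j<r. monom (d j) j)"

definition block_coeff :: "(nat \<times> nat \<Rightarrow> 'f) \<Rightarrow> nat \<Rightarrow> nat \<Rightarrow> 'f" where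
  "block_coeff c i j = (\<Sum>k\<le>s. a i ^ k * c (k, j))"

definition point :: "nat \<Rightarrow> 'f" where "point n = \<beta> (n div R + 1) (n mod R + 1)"

definition codeword :: "(nat \<times> nat \<Rightarrow> 'f) \<Rightarrow> nat \<Rightarrow> 'f" where
  "codeword c n = (if n < l * R then teval q (tpoly (block_coeff c (n div R + 1))) (point n) else 0)"

definition message :: "(nat \<Rightarrow> 'f poly) \<Rightarrow> 'f poly" where
  "message g = (\<Sum>k\<le>s. tmult q (g k) (tpow q phiTR k))"

definition arrays :: "(nat \<times> nat \<Rightarrow> 'f) set" where "arrays = {..s} \<times> {..<r} \<rightarrow>\<^sub>E UNIV"

lemma mem_W_iff: "x \<in> W i \<longleftrightarrow> Phi x = a i * x"
  unfolding W_def torsion_def phiTR_def drinfeld_monom_one drinfeld_monom_one_minus_const[OF R_ge_1]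
  by (simp add: teval_diff teval_const)

lemma span_B: "i \<in> {1..l} \<Longrightarrow> span_over (Fq q) (*) (B i) = W i"
  using \<beta>_basis by (simp add: B_def W_def)

lemma B_subset_W: "i \<in> {1..l} \<Longrightarrow> B i \<subseteq> W i"
  using span_B lin.span_over_superset by blast

lemma card_W: "i \<in> {1..l} \<Longrightarrow> card (W i) = q ^ R"
proof -
  assume i: "i \<in> {1..l}"
  have "set (map (\<beta> i) [1..<R+1]) = B i" by (auto simp: B_def)
  then show ?thesis
    using lin.card_lin_span[of "map (\<beta> i) [1..<R+1]"] \<beta>_basis i span_B[OF i] card_Fq R_ge_1
    by (simp add: lin.span_over_set[symmetric])
qed

lemma Phi_power_W: "i \<in> {1..l} \<Longrightarrow> x \<in> W i \<Longrightarrow> (Phi ^^ k) x = a i ^ k * x"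
proof (induction k)
  case (Suc k)
  then have "(Phi ^^ Suc k) x = a i ^ k * Phi x"
    by (simp add: teval_scale_point Fq_power a_Fq)
  then show ?case using Suc.prems by (simp add: mem_W_iff mult_ac)
qed simp

lemma teval_tpoly: "teval q (tpoly d) x = (\<Sum>j<r. d j * x ^ (q ^ j))"
  unfolding tpoly_def by (simp add: teval_sum teval_monom)

lemma tpoly_cong: "(\<And>j. j < r \<Longrightarrow> d j = d' j) \<Longrightarrow> tpoly d = tpoly d'"
  unfolding tpoly_def by (intro sum.cong) auto

lemma coeff_tpoly: "j < r \<Longrightarrow> coeff (tpoly d) j = d j"
  unfolding tpoly_def coeff_sum coeff_monom by (simp add: sum.delta)

lemma degree_tpoly: "degree (tpoly d) \<le> r - 1"
  unfolding tpoly_def by (intro degree_sum_le order.trans[OF degree_monom_le]) auto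

lemma tpoly_coeff: "degree f \<le> r - 1 \<Longrightarrow> tpoly (coeff f) = f"
  using r_ge_1 by (intro poly_eqI) (auto simp: tpoly_def coeff_sum coeff_monom coeff_eq_0 sum.delta)

lemma teval_message_W:
  assumes g: "\<forall>k. degree (g k) \<le> r - 1" and i: "i \<in> {1..l}" and x: "x \<in> W i"
  shows "teval q (message g) x = teval q (tpoly (block_coeff (\<lambda>(k, j). coeff (g k) j) i)) x"
proof -
  have "teval q (message g) x = (\<Sum>k\<le>s. a i ^ k * teval q (g k) x)"
    unfolding message_def
    by (simp add: teval_sum teval_tmult teval_tpow Phi_power_W[OF i x] teval_scale_point Fq_power a_Fq[OF i])
  also have "\<dots> = (\<Sum>k\<le>s. a i ^ k * teval q (tpoly (coeff (g k))) x)"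
    using g by (simp add: tpoly_coeff)
  also have "\<dots> = teval q (tpoly (block_coeff (\<lambda>(k, j). coeff (g k) j) i)) x"
    by (simp add: teval_tpoly block_coeff_def sum_distrib_left sum_distrib_right mult.assoc
        sum.swap[of _ "{..s}"])
  finally show ?thesis .
qed

lemma degree_message:
  assumes "\<forall>k. degree (g k) \<le> r - 1"
  shows "degree (message g) \<le> s * R + (r - 1)"
  unfolding message_def
proof (intro degree_sum_le)
  fix k assume "k \<in> {..s}"
  then have "degree (tpow q phiTR k) \<le> s * R"
    using degree_tpow_le[of phiTR k] degree_tpow_le[of "[:\<alpha>, 1:]" R]
    by (simp add: phiTR_def drinfeld_monom_one) (meson le_trans mult_le_mono)
  moreover have "degree (g k) \<le> r - 1" using assms by blast
  ultimately show "degree (tmult q (g k) (tpow q phiTR k)) \<le> s * R + (r - 1)"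
    using degree_tmult_le[of "g k" "tpow q phiTR k"] by linarith
qed simp

lemma point_mem_B:
  assumes "n < l * R"
  shows "n div R + 1 \<in> {1..l}" "point n \<in> B (n div R + 1)"
  using assms R_ge_1 by (auto simp: point_def B_def less_mult_imp_div_less Suc_leI)

definition block :: "nat \<Rightarrow> nat set" where "block i = {(i - 1) * R..<i * R}"

lemma mem_block_iff:
  assumes "i \<ge> 1"
  shows "n \<in> block i \<longleftrightarrow> n div R + 1 = i"
proof -
  have "n div R + 1 = i \<longleftrightarrow> i - 1 \<le> n div R \<and> n div R < i" using assms by linarith
  also have "\<dots> \<longleftrightarrow> (i - 1) * R \<le> n \<and> n < i * R"
    using R_ge_1 by (simp add: less_eq_div_iff_mult_less_eq div_less_iff_less_mult)
  finally show ?thesis by (simp add: block_def)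
qed

lemma lessThan_eq_UN_block: "{..<l * R} = (\<Union>i\<in>{1..l}. block i)"
proof (intro set_eqI iffI)
  fix n assume "n \<in> {..<l * R}"
  then have "n div R + 1 \<in> {1..l}" using point_mem_B(1) by simp
  moreover have "n \<in> block (n div R + 1)" using mem_block_iff[of "n div R + 1" n] by simp
  ultimately show "n \<in> (\<Union>i\<in>{1..l}. block i)" by blast
next
  fix n assume "n \<in> (\<Union>i\<in>{1..l}. block i)"
  then obtain i where "i \<le> l" "n \<in> block i" by auto
  then have "n < i * R" "i * R \<le> l * R" by (simp_all add: block_def)
  then show "n \<in> {..<l * R}" by (meson lessThan_iff less_le_trans)
qed

lemma codeword_block:
  assumes "i \<in> {1..l}" "n \<in> block i"
  shows "codeword c n = teval q (tpoly (block_coeff c i)) (point n)"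
proof -
  have "n < l * R" "n div R + 1 = i"
    using assms lessThan_eq_UN_block mem_block_iff[of i n] by auto
  then show ?thesis by (simp add: codeword_def)
qed

lemma point_image_block:
  assumes i: "i \<in> {1..l}"
  shows "point ` block i = B i"
proof (intro set_eqI iffI)
  fix x assume "x \<in> point ` block i"
  then obtain n where n: "n \<in> block i" "x = point n" by blast
  have "n \<in> {..<l * R}" using i n(1) lessThan_eq_UN_block by blast
  moreover have "n div R + 1 = i" using i n(1) mem_block_iff by simp
  ultimately show "x \<in> B i" using point_mem_B(2)[of n] n(2) by simp
next
  fix x assume "x \<in> B i"
  then obtain j where j: "j \<in> {1..R}" "x = \<beta> i j" by (auto simp: B_def)
  define n where "n = (i - 1) * R + (j - 1)"
  have "j - 1 < R" using j by auto
  then have "n mod R = j - 1" unfolding n_def by (subst mod_mult_self3) simp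
  have "(i - 1) * R + R = i * R" using i by (cases i) auto
  then have "n \<in> block i" using j by (auto simp: n_def block_def)
  then have "point n = x"
    using i j \<open>n mod R = j - 1\<close> mem_block_iff[of i n] by (auto simp: point_def)
  then show "x \<in> point ` block i" using \<open>n \<in> block i\<close> by blast
qed

lemma codeword_message:
  assumes "\<forall>k. degree (g k) \<le> r - 1"
  shows "(\<lambda>n. if n < l * R then teval q (message g) (point n) else 0) = codeword (\<lambda>(k, j). coeff (g k) j)"
  using teval_message_W[OF assms point_mem_B(1) subsetD[OF B_subset_W[OF point_mem_B(1)] point_mem_B(2)]]
  by (auto simp: codeword_def)

lemma codeword_restrict: "codeword (restrict c ({..s} \<times> {..<r})) = codeword c"
  unfolding codeword_def block_coeff_def
  by (intro ext if_cong refl arg_cong2[where f = "teval q"] tpoly_cong) auto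

lemma range_codeword: "range codeword = codeword ` arrays"
  unfolding arrays_def using codeword_restrict by (auto simp: image_iff) (metis restrict_PiE_iff UNIV_I)

lemma codeword_tpoly: "codeword (\<lambda>(k, j). coeff (tpoly (\<lambda>j. c (k, j))) j) = codeword c"
  unfolding codeword_def block_coeff_def
  by (intro ext if_cong refl arg_cong2[where f = "teval q"] tpoly_cong) (simp add: coeff_tpoly)

lemma image_message_eq_range_codeword:
  "(\<lambda>f. (\<lambda>n. if n < l * R then teval q f (point n) else 0)) `
     {message g | g. \<forall>k. degree (g k) \<le> r - 1} = range codeword"
proof (intro set_eqI iffI)
  fix x assume "x \<in> (\<lambda>f. (\<lambda>n. if n < l * R then teval q f (point n) else 0)) `
     {message g | g. \<forall>k. degree (g k) \<le> r - 1}"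
  then show "x \<in> range codeword" using codeword_message by auto
next
  fix x assume "x \<in> range codeword"
  then obtain c where x: "x = codeword c" by blast
  define g where "g k = tpoly (\<lambda>j. c (k, j))" for k
  have g: "\<forall>k. degree (g k) \<le> r - 1" unfolding g_def using degree_tpoly by blast
  then have "x = (\<lambda>n. if n < l * R then teval q (message g) (point n) else 0)"
    using codeword_message[OF g] codeword_tpoly x by (simp add: g_def)
  then show "x \<in> (\<lambda>f. (\<lambda>n. if n < l * R then teval q f (point n) else 0)) `
     {message g | g. \<forall>k. degree (g k) \<le> r - 1}" using g by blast
qed

lemma codeword_add: "codeword (c + c') = codeword c + codeword c'"
  by (rule ext) (simp add: codeword_def teval_tpoly block_coeff_def sum.distrib algebra_simps)

lemma codeword_diff: "codeword (c - c') = codeword c - codeword c'"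
  by (rule ext) (simp add: codeword_def teval_tpoly block_coeff_def sum_subtractf algebra_simps)

lemma codeword_scale: "codeword (\<lambda>x. u * c x) = vscale u (codeword c)"
  by (rule ext) (simp add: codeword_def vscale_def teval_tpoly block_coeff_def sum_distrib_left mult_ac)

lemma subspace_range_codeword: "subspace_over (Fq q) vscale (range codeword)"
  unfolding subspace_over_def
proof (intro conjI ballI)
  show "0 \<in> range codeword"
    using codeword_scale[of 0 "\<lambda>_. 0"] by (auto simp: vscale_def fun_eq_iff intro!: range_eqI)
  fix x y assume "x \<in> range codeword" "y \<in> range codeword"
  then show "x + y \<in> range codeword" by (auto simp flip: codeword_add)
next
  fix u x assume "x \<in> range codeword"
  then show "vscale u x \<in> range codeword" by (auto simp flip: codeword_scale)
qed

lemma teval_nonvanishing_on_B: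
  assumes i: "i \<in> {1..l}" and "f \<noteq> 0" "degree f < R"
  shows "\<exists>x\<in>B i. teval q f x \<noteq> 0"
proof (rule ccontr)
  assume "\<not> (\<exists>x\<in>B i. teval q f x \<noteq> 0)"
  then have "W i \<subseteq> {x. teval q f x = 0}"
    unfolding span_B[OF i, symmetric]
    by (intro lin.span_over_minimal) (auto simp: teval_add_point teval_scale_point)
  then have "q ^ R \<le> card {x. teval q f x = 0}"
    using card_W[OF i] by (metis card_mono finite)
  also have "\<dots> \<le> q ^ degree f" by (rule card_teval_roots_le[OF \<open>f \<noteq> 0\<close>])
  finally show False using \<open>degree f < R\<close> q_ge_2 by (simp add: power_le_imp_le_exp leD)
qed

lemma block_coeff_eq_0:
  assumes i: "i \<in> {1..l}" and zero: "\<And>n. n \<in> block i \<Longrightarrow> codeword c n = 0" and "j < r"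
  shows "block_coeff c i j = 0"
proof -
  have "\<forall>x\<in>B i. teval q (tpoly (block_coeff c i)) x = 0"
    using zero codeword_block[OF i] by (auto simp flip: point_image_block[OF i])
  moreover have "degree (tpoly (block_coeff c i)) < R"
    using degree_tpoly r_minus_1_less_R by (rule le_less_trans)
  ultimately have "tpoly (block_coeff c i) = 0"
    using teval_nonvanishing_on_B[OF i] by blast
  then show ?thesis using coeff_tpoly[OF \<open>j < r\<close>, of "block_coeff c i"] by simp
qed

text \<open>All \<open>block_coeff c i j\<close> vanish, so the polynomial \<open>\<Sum>\<^sub>k c (k, j) X\<^sup>k\<close> of degree
  \<open>\<le> s\<close> has the \<open>l > s\<close> distinct roots \<open>a\<^sub>i\<close>.\<close>
lemma codeword_eq_0_imp:
  assumes "codeword c = 0" "k \<le> s" "j < r"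
  shows "c (k, j) = 0"
proof -
  let ?p = "\<Sum>k\<le>s. monom (c (k, j)) k"
  have "poly ?p (a i) = 0" if "i \<in> {1..l}" for i
  proof -
    have "poly ?p (a i) = block_coeff c i j"
      by (simp add: poly_sum poly_monom block_coeff_def mult.commute)
    then show ?thesis using block_coeff_eq_0[OF that _ \<open>j < r\<close>] assms(1) by simp
  qed
  have "?p = 0"
  proof (rule ccontr)
    assume "?p \<noteq> 0"
    have "l = card (a ` {1..l})" using inj_a by (simp add: card_image)
    also have "\<dots> \<le> card {x. poly ?p x = 0}"
      using \<open>\<And>i. i \<in> {1..l} \<Longrightarrow> poly ?p (a i) = 0\<close> by (intro card_mono) auto
    also have "\<dots> \<le> degree ?p" by (rule card_poly_roots_bound[OF \<open>?p \<noteq> 0\<close>])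
    also have "\<dots> \<le> s" by (intro degree_sum_le order.trans[OF degree_monom_le]) auto
    finally show False using s_less_l by simp
  qed
  then have "coeff ?p k = 0" by simp
  then show ?thesis using assms(2) by (simp add: coeff_sum coeff_monom sum.delta)
qed

lemma inj_on_codeword: "inj_on codeword arrays"
proof (rule inj_onI)
  fix c c' assume c: "c \<in> arrays" "c' \<in> arrays" "codeword c = codeword c'"
  then have "codeword (c - c') = 0" by (simp add: codeword_diff)
  then have "c x = c' x" if "x \<in> {..s} \<times> {..<r}" for x
    using codeword_eq_0_imp[of "c - c'"] that by fastforce
  then show "c = c'" using c(1,2) unfolding arrays_def by (auto intro: PiE_ext)
qed

lemma card_arrays: "card arrays = q ^ (m * ((s + 1) * r))"
  by (simp add: arrays_def card_PiE card_UNIV card_cartesian_product power_mult)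

lemma finite_range_codeword: "finite (range codeword)"
  unfolding range_codeword arrays_def by (intro finite_imageI finite_PiE) auto

lemma dim_range_codeword: "dim_over (Fq q) vscale (range codeword) = m * ((s + 1) * r)"
proof -
  have "q ^ dim_over (Fq q) vscale (range codeword) = card (range codeword)"
    using vec.card_span_over_eq_power_dim[of "range codeword"] finite_range_codeword card_Fq
    by (simp add: vec.span_over_subspace[OF subspace_range_codeword])
  also have "\<dots> = q ^ (m * ((s + 1) * r))"
    using card_image[OF inj_on_codeword] card_arrays by (simp add: range_codeword)
  finally show ?thesis using q_ge_2 by (simp add: power_inject_exp)
qed

text \<open>The sum \<open>W\<^sub>1 + \<dots> + W\<^sub>l\<close> is direct: \<open>elim j = (\<Phi> - a\<^sub>j) \<circ> \<dots> \<circ> (\<Phi> - a\<^sub>1)\<close> kills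
  \<open>W\<^sub>1, \<dots>, W\<^sub>j\<close> and is multiplication by a nonzero scalar on \<open>W\<^sub>t\<close> for \<open>t > j\<close>.\<close>

primrec elim :: "nat \<Rightarrow> 'f \<Rightarrow> 'f" where
  "elim 0 x = x"
| "elim (Suc j) x = Phi (elim j x) - a (Suc j) * elim j x"

lemma elim_zero [simp]: "elim j 0 = 0"
  by (induction j) simp_all

lemma elim_add: "elim j (x + y) = elim j x + elim j y"
  by (induction j) (simp_all add: teval_add_point algebra_simps)

lemma elim_scale: "c \<in> Fq q \<Longrightarrow> elim j (c * x) = c * elim j x"
  by (induction j) (simp_all add: teval_scale_point algebra_simps)

lemma elim_W:
  assumes t: "t \<in> {1..l}" and x: "x \<in> W t" and "j \<le> l"
  shows "elim j x = (\<Prod>i=1..j. a t - a i) * x"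
  using \<open>j \<le> l\<close>
proof (induction j)
  case (Suc j)
  let ?c = "\<Prod>i=1..j. a t - a i"
  have "?c \<in> Fq q" using Suc.prems t by (intro Fq_prod Fq_diff a_Fq) auto
  then have "elim (Suc j) x = ?c * (a t * x) - a (Suc j) * (?c * x)"
    using Suc x by (simp add: teval_scale_point mem_W_iff)
  then show ?case by (simp add: algebra_simps)
qed simp

definition span_blocks :: "nat \<Rightarrow> 'f set" where
  "span_blocks j = span_over (Fq q) (*) (\<Union>i\<in>{1..j}. B i)"

lemma elim_span_blocks: "j \<le> l \<Longrightarrow> x \<in> span_blocks j \<Longrightarrow> elim j x = 0"
  using lin.span_over_minimal[of "\<Union>i\<in>{1..j}. B i" "{x. elim j x = 0}"]
    elim_W B_subset_W prod_zero[of "{1..j}"]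
  by (fastforce simp: span_blocks_def elim_add elim_scale)

lemma span_blocks_inter_W:
  assumes "j < t" "t \<le> l" "u \<in> span_blocks j" "u \<in> W t"
  shows "u = 0"
proof -
  have t: "t \<in> {1..l}" using assms by auto
  have "a t - a i \<noteq> 0" if "i \<in> {1..j}" for i
    using that assms inj_onD[OF inj_a _ _ t] by force
  then have "(\<Prod>i=1..j. a t - a i) \<noteq> 0" by simp
  moreover have "(\<Prod>i=1..j. a t - a i) * u = 0"
    using elim_span_blocks[of j u] elim_W[OF t assms(4)] assms by simp
  ultimately show ?thesis by simp
qed

lemma card_span_blocks: "j \<le> l \<Longrightarrow> card (span_blocks j) = q ^ (j * R)"
proof (induction j)
  case 0
  have "span_blocks 0 \<subseteq> {0}"
    unfolding span_blocks_def by (rule lin.span_over_minimal) auto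
  then have "span_blocks 0 = {0}"
    using lin.span_over_zero unfolding span_blocks_def by blast
  then show ?case by simp
next
  case (Suc j)
  have t: "Suc j \<in> {1..l}" using Suc.prems by auto
  have "(\<Union>i\<in>{1..Suc j}. B i) = (\<Union>i\<in>{1..j}. B i) \<union> B (Suc j)"
    by (auto simp: atLeastAtMostSuc_conv)
  then have "span_blocks (Suc j) = {u + w | u w. u \<in> span_blocks j \<and> w \<in> W (Suc j)}"
    unfolding span_blocks_def by (simp only: lin.span_over_Un span_B[OF t])
  also have "\<dots> = (\<lambda>(u, w). u + w) ` (span_blocks j \<times> W (Suc j))"
    by auto
  finally have span: "span_blocks (Suc j) = (\<lambda>(u, w). u + w) ` (span_blocks j \<times> W (Suc j))" .
  have "inj_on (\<lambda>(u, w). u + w) (span_blocks j \<times> W (Suc j))"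
  proof (rule inj_onI, clarify)
    fix u w u' w' assume uw: "u \<in> span_blocks j" "w \<in> W (Suc j)" "u' \<in> span_blocks j"
      "w' \<in> W (Suc j)" "u + w = u' + w'"
    have "u - u' \<in> span_blocks j"
      using uw lin.span_over_diff unfolding span_blocks_def by blast
    moreover have "u - u' = w' - w" using uw(5) by (simp add: algebra_simps)
    then have "u - u' \<in> W (Suc j)"
      using uw(2,4) by (simp add: mem_W_iff teval_diff_point right_diff_distrib)
    ultimately have "u - u' = 0" using span_blocks_inter_W Suc.prems by blast
    then show "u = u' \<and> w = w'" using uw(5) by simp
  qed
  then have "card (span_blocks (Suc j)) = card (span_blocks j) * card (W (Suc j))"
    by (simp add: span card_image card_cartesian_product)
  then show ?case using Suc card_W[OF t] by (simp add: power_add)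
qed

lemma codeword_eq_teval:
  obtains f where "degree f \<le> s * R + (r - 1)" "\<And>n. n < l * R \<Longrightarrow> codeword c n = teval q f (point n)"
proof -
  define g where "g k = tpoly (\<lambda>j. c (k, j))" for k
  have g: "\<forall>k. degree (g k) \<le> r - 1" unfolding g_def using degree_tpoly by blast
  have "codeword c n = teval q (message g) (point n)" if "n < l * R" for n
    using fun_cong[OF codeword_message[OF g], of n] codeword_tpoly that by (simp add: g_def)
  then show ?thesis using that degree_message[OF g] by blast
qed

lemma card_span_points: "card (span_over (Fq q) (*) (point ` {..<l * R})) = q ^ (l * R)"
proof -
  have "point ` {..<l * R} = (\<Union>i\<in>{1..l}. B i)"
    unfolding lessThan_eq_UN_block by (simp add: image_UN point_image_block)
  then show ?thesis using card_span_blocks[of l] by (simp add: span_blocks_def)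
qed

lemma rank_wt_codeword_ge:
  assumes "codeword c \<noteq> 0"
  shows "l * R \<le> rank_wt q (l * R) (codeword c) + (s * R + (r - 1))"
proof -
  obtain f where f: "degree f \<le> s * R + (r - 1)" "\<And>n. n < l * R \<Longrightarrow> codeword c n = teval q f (point n)"
    using codeword_eq_teval by blast
  have "f \<noteq> 0"
  proof
    assume "f = 0"
    then have "codeword c n = 0" for n using f(2) by (cases "n < l * R") (auto simp: codeword_def)
    then show False using assms by auto
  qed
  then have "l * R \<le> dim_over (Fq q) (*) (teval q f ` point ` {..<l * R}) + degree f"
    by (rule dim_over_image_teval_ge) (simp add: card_span_points)
  moreover have "codeword c ` {..<l * R} = teval q f ` point ` {..<l * R}"
    using f(2) by (auto simp: image_iff)
  ultimately show ?thesis using f(1) unfolding rank_wt_def by simp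
qed

lemma rank_wt_le_card_support:
  fixes x :: "nat \<Rightarrow> 'f"
  shows "rank_wt q n x \<le> card {j. j < n \<and> x j \<noteq> 0}"
proof -
  have "rank_wt q n x \<le> card (x ` {..<n} - {0})"
    unfolding rank_wt_def by (rule lin.dim_over_le_card) simp
  also have "x ` {..<n} - {0} = x ` {j. j < n \<and> x j \<noteq> 0}" by auto
  also have "card \<dots> \<le> card {j. j < n \<and> x j \<noteq> 0}" by (rule card_image_le) simp
  finally show ?thesis .
qed

lemma codeword_eq_if_block_coeff_eq:
  assumes "n < l * R" "\<And>j. j < r \<Longrightarrow> block_coeff c (n div R + 1) j = block_coeff c' (n div R + 1) j"
  shows "codeword c n = codeword c' n"
  using assms tpoly_cong[of "block_coeff c (n div R + 1)" "block_coeff c' (n div R + 1)"]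
  by (simp add: codeword_def)

lemma prefix_le: "s * R + (r - 1) \<le> l * R"
proof -
  have "s * R + (r - 1) \<le> (s + 1) * R" using r_minus_1_less_R by simp
  also have "\<dots> \<le> l * R" using s_less_l by (rule mult_le_mono1)
  finally show ?thesis .
qed

text \<open>The first \<open>s R + r - 1\<close> coordinates of a codeword are determined by its prefix data,
  which consists of fewer than the \<open>(s + 1) r\<close> free coefficients.\<close>
definition prefix_data :: "(nat \<times> nat \<Rightarrow> 'f) \<Rightarrow> (nat \<times> nat \<Rightarrow> 'f) \<times> (nat \<Rightarrow> 'f)" where
  "prefix_data c = (restrict (\<lambda>(i, j). block_coeff c i j) ({1..s} \<times> {..<r}),
                    restrict (\<lambda>t. codeword c (s * R + t)) {..<r - 1})"

lemma codeword_eq_if_prefix_data_eq: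
  assumes "prefix_data c = prefix_data c'" "n < s * R + (r - 1)"
  shows "codeword c n = codeword c' n"
proof (cases "n < s * R")
  case True
  then have "n div R + 1 \<in> {1..s}" using R_ge_1 by (simp add: less_mult_imp_div_less Suc_leI)
  then have "block_coeff c (n div R + 1) j = block_coeff c' (n div R + 1) j" if "j < r" for j
    using fun_cong[OF arg_cong[OF assms(1), of fst], of "(n div R + 1, j)"] that
    by (simp add: prefix_data_def)
  then show ?thesis using assms(2) prefix_le by (intro codeword_eq_if_block_coeff_eq) simp_all
next
  case False
  then have "n - s * R < r - 1" using assms(2) by simp
  then show ?thesis
    using fun_cong[OF arg_cong[OF assms(1), of snd], of "n - s * R"] False by (simp add: prefix_data_def)
qed

lemma not_inj_on_prefix_data: "\<not> inj_on prefix_data arrays"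
proof
  let ?D = "(({1..s} \<times> {..<r}) \<rightarrow>\<^sub>E (UNIV :: 'f set)) \<times> ({..<r - 1} \<rightarrow>\<^sub>E (UNIV :: 'f set))"
  assume "inj_on prefix_data arrays"
  moreover have "prefix_data ` arrays \<subseteq> ?D"
    unfolding prefix_data_def mem_Times_iff
    by (intro image_subsetI SigmaI restrict_PiE_iff[THEN iffD2]) auto
  moreover have "finite ?D" by (simp add: finite_PiE)
  ultimately have "card arrays \<le> card ?D" by (rule card_inj_on_le)
  also have "card ?D = q ^ (m * (s * r + (r - 1)))"
    by (simp add: card_PiE card_cartesian_product card_UNIV power_mult power_add)
  also have "\<dots> < card arrays"
    unfolding card_arrays using r_ge_1 m_ge_1 q_ge_2 by (intro power_strict_increasing) auto
  finally show False by simp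
qed

lemma codewords_agreeing_on_prefix:
  obtains c c' where "codeword c \<noteq> codeword c'"
    "\<And>n. n < s * R + (r - 1) \<Longrightarrow> codeword c n = codeword c' n"
proof -
  obtain c c' where "c \<in> arrays" "c' \<in> arrays" "c \<noteq> c'" "prefix_data c = prefix_data c'"
    using not_inj_on_prefix_data unfolding inj_on_def by blast
  then show ?thesis
    using that inj_on_codeword codeword_eq_if_prefix_data_eq unfolding inj_on_def by blast
qed

lemma exists_codeword_rank_le:
  "\<exists>x\<in>range codeword. x \<noteq> 0 \<and> rank_wt q (l * R) x + (s * R + (r - 1)) \<le> l * R"
proof -
  obtain c c' where c: "codeword c \<noteq> codeword c'"
    "\<And>n. n < s * R + (r - 1) \<Longrightarrow> codeword c n = codeword c' n"
    using codewords_agreeing_on_prefix by blast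
  define x where "x = codeword (c - c')"
  have x: "x n = codeword c n - codeword c' n" for n by (simp add: x_def codeword_diff)
  have "x \<noteq> 0" using c(1) x by (auto simp: fun_eq_iff)
  have "{n. n < l * R \<and> x n \<noteq> 0} \<subseteq> {s * R + (r - 1)..<l * R}"
    using c(2) x by (auto simp: not_less[symmetric])
  then have "card {n. n < l * R \<and> x n \<noteq> 0} \<le> l * R - (s * R + (r - 1))"
    using card_mono[OF finite_atLeastLessThan] by (metis card_atLeastLessThan)
  then have "rank_wt q (l * R) x + (s * R + (r - 1)) \<le> l * R"
    using rank_wt_le_card_support[of "l * R" x] prefix_le by linarith
  then show ?thesis using \<open>x \<noteq> 0\<close> unfolding x_def by blast
qed

lemma min_rank_dist_range_codeword:
  "min_rank_dist q (l * R) (range codeword) = l * R - (s * R + (r - 1))"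
proof -
  let ?X = "{rank_wt q (l * R) (x - y) | x y. x \<in> range codeword \<and> y \<in> range codeword \<and> x \<noteq> y}"
  have lower: "l * R - (s * R + (r - 1)) \<le> e" if "e \<in> ?X" for e
  proof -
    obtain c c' where "e = rank_wt q (l * R) (codeword c - codeword c')" "codeword c \<noteq> codeword c'"
      using \<open>e \<in> ?X\<close> by blast
    then have "e = rank_wt q (l * R) (codeword (c - c'))" "codeword (c - c') \<noteq> 0"
      by (simp_all add: codeword_diff)
    then show ?thesis using rank_wt_codeword_ge[of "c - c'"] by linarith
  qed
  obtain x where x: "x \<in> range codeword" "x \<noteq> 0" "rank_wt q (l * R) x + (s * R + (r - 1)) \<le> l * R"
    using exists_codeword_rank_le by blast
  have "0 \<in> range codeword"
    using vec.span_over_zero vec.span_over_subspace[OF subspace_range_codeword] by blast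
  then have "rank_wt q (l * R) (x - 0) \<in> ?X" using x(1,2) by blast
  then have "rank_wt q (l * R) x = l * R - (s * R + (r - 1))" using lower[of "rank_wt q (l * R) x"] x(3) by simp
  then have "l * R - (s * R + (r - 1)) \<in> ?X" using \<open>rank_wt q (l * R) (x - 0) \<in> ?X\<close> by simp
  moreover have "?X \<subseteq> (\<lambda>(x, y). rank_wt q (l * R) (x - y)) ` (range codeword \<times> range codeword)"
  proof
    fix e assume "e \<in> ?X"
    then obtain x y where "e = rank_wt q (l * R) (x - y)" "x \<in> range codeword" "y \<in> range codeword"
      by blast
    then show "e \<in> (\<lambda>(x, y). rank_wt q (l * R) (x - y)) ` (range codeword \<times> range codeword)"
      by (intro image_eqI[of _ _ "(x, y)"]) auto
  qed
  then have "finite ?X" using finite_range_codeword by (meson finite_SigmaI finite_imageI finite_subset)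
  ultimately show ?thesis unfolding min_rank_dist_def using lower by (intro Min_eqI) auto
qed

lemma dim_block_ge:
  assumes b: "b \<in> {1..l}" and ne: "\<exists>n\<in>block b. codeword d n \<noteq> 0"
  shows "\<delta> \<le> dim_over (Fq q) (*) (codeword d ` block b)"
proof -
  define h where "h = tpoly (block_coeff d b)"
  have "codeword d ` block b = (\<lambda>n. teval q h (point n)) ` block b"
    by (intro image_cong refl) (simp add: h_def codeword_block[OF b])
  also have "\<dots> = teval q h ` B b"
    by (simp only: point_image_block[OF b, symmetric] image_image)
  finally have img: "codeword d ` block b = teval q h ` B b" .
  have "h \<noteq> 0"
  proof
    assume "h = 0"
    then have "codeword d ` block b \<subseteq> {0}" unfolding img by auto
    then show False using ne by auto
  qed
  then have "R \<le> dim_over (Fq q) (*) (teval q h ` B b) + degree h"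
    by (rule dim_over_image_teval_ge) (simp add: span_B[OF b] card_W[OF b])
  moreover have "degree h \<le> r - 1" unfolding h_def by (rule degree_tpoly)
  ultimately show ?thesis using R_eq r_ge_1 unfolding img by linarith
qed

lemma rank_locality_range_codeword: "rank_locality q (l * R) (range codeword) r \<delta>"
  unfolding rank_locality_def
proof (intro allI impI)
  fix n0 assume "n0 < l * R"
  define b where "b = n0 div R + 1"
  have b: "b \<in> {1..l}" using point_mem_B(1)[OF \<open>n0 < l * R\<close>] by (simp add: b_def)
  have "n0 \<in> block b" using mem_block_iff[of b n0] by (simp add: b_def)
  moreover have "block b \<subseteq> {..<l * R}" using b lessThan_eq_UN_block by blast
  moreover have "card (block b) \<le> r + \<delta> - 1"
  proof -
    have "card (block b) = R" using b by (cases b) (simp_all add: block_def)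
    then show ?thesis using R_eq by linarith
  qed
  moreover have "\<delta> \<le> dim_over (Fq q) (*) ((x - y) ` block b)"
    if xy: "x \<in> range codeword" "y \<in> range codeword" and ne: "\<exists>n\<in>block b. x n \<noteq> y n" for x y
  proof -
    obtain d where d: "x - y = codeword d" using xy by (auto simp flip: codeword_diff)
    have "\<exists>n\<in>block b. codeword d n \<noteq> 0" using ne by (auto simp flip: d)
    then show ?thesis using dim_block_ge[OF b] d by simp
  qed
  ultimately show "\<exists>\<Gamma>. n0 \<in> \<Gamma> \<and> \<Gamma> \<subseteq> {..<l * R} \<and> card \<Gamma> \<le> r + \<delta> - 1 \<and>
      (\<forall>x\<in>range codeword. \<forall>y\<in>range codeword. (\<exists>j\<in>\<Gamma>. x j \<noteq> y j) \<longrightarrow>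
        \<delta> \<le> dim_over (Fq q) (*) ((x - y) ` \<Gamma>))"
    by blast
qed

end

text \<open>The hypotheses on \<open>P\<close>, (C1), (C2), \<open>l < q\<close>, (C4) and \<open>a\<^sub>i \<noteq> 0\<close> only serve, in the paper, to
  guarantee that each \<open>W\<^sub>i\<close> has an \<open>\<bbbF>\<^sub>q\<close>-basis of \<open>R\<close> elements in \<open>\<bbbF>\<^sub>q\<^sub>m\<close>; here these
  bases are given by \<open>\<beta>_basis\<close>.\<close>
theorem theorem3p4:
  fixes q m r \<delta> l s :: nat
    and a :: "nat \<Rightarrow> 'f::{finite,field}"
    and P :: "'f poly" and \<alpha> :: 'f
    and \<beta> :: "nat \<Rightarrow> nat \<Rightarrow> 'f"
  defines "R \<equiv> r + \<delta> - 1"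
  defines "h \<equiv> (\<Prod>i=1..l. monom 1 R - [:a i:])"
  defines "\<phi>TR \<equiv> drinfeld q \<alpha> (monom 1 R)"
  defines "M \<equiv> {(\<Sum>k\<le>s. tmult q (g k) (tpow q \<phi>TR k)) | g. \<forall>k. degree (g k) \<le> r - 1}"
  defines "enc \<equiv> (\<lambda>f. (\<lambda>n. if n < l * R then teval q f (\<beta> (n div R + 1) (n mod R + 1)) else 0))"
  defines "C \<equiv> enc ` M"
  defines "n \<equiv> l * R"
  defines "k \<equiv> (s + 1) * r"
  assumes q_pp: "\<exists>p e. prime p \<and> e > 0 \<and> q = p ^ e"
    and card_k: "card (UNIV :: 'f set) = q ^ m"
    and r1: "r \<ge> 1" and \<delta>2: "\<delta> \<ge> 2" and l1: "l \<ge> 1"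
    and C1: "coprime q R"
    and C2: "(s + 1) * r < l * R"
    and C3: "s + 1 \<le> l" "l < q"
    and C4: "l * R \<le> m"
    and a_in: "\<forall>i\<in>{1..l}. a i \<in> Fq q \<and> a i \<noteq> 0"
    and a_inj: "inj_on a {1..l}"
    and P_irr: "irreducible_over q P" and P_monic: "lead_coeff P = 1" and P_deg: "degree P = m"
    and P_cong: "\<exists>g. poly_over q g \<and> P - 1 = h * g"
    and \<alpha>_root: "poly P \<alpha> = 0"
    and \<beta>_basis: "\<forall>i\<in>{1..l}. indep_over (Fq q) (*) (map (\<beta> i) [1..<R+1]) \<and>
        span_over (Fq q) (*) (\<beta> i ` {1..R}) = torsion q \<alpha> (monom 1 R - [:a i:])"
  shows "subspace_over (Fq q) vscale C
    \<and> dim_over (Fq q) vscale C = m * k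
    \<and> int (min_rank_dist q n C) = int (l * R) - int (R * s) - int r + 1
    \<and> rank_locality q n C r \<delta>
    \<and> int (min_rank_dist q n C) = int n - int k + 1 - (\<lceil>real k / real r\<rceil> - 1) * (int \<delta> - 1)"
proof -
  interpret drinfeld_code q m "TYPE('f)" r \<delta> l s R a \<alpha> \<beta>
    by unfold_locales (use q_pp card_k r1 \<delta>2 C3 a_in a_inj \<beta>_basis in \<open>auto simp: R_def\<close>)
  have C: "C = range codeword"
    using image_message_eq_range_codeword
    unfolding C_def enc_def M_def \<phi>TR_def message_def phiTR_def point_def by simp
  have R_int: "int R = int r + int \<delta> - 1" using R_def \<delta>2 by simp
  have "real k / real r = real (s + 1)" using r1 unfolding k_def of_nat_mult by simp
  then have ceil: "\<lceil>real k / real r\<rceil> = int (s + 1)" by (simp only: ceiling_of_nat)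
  have dist: "int (min_rank_dist q n C) = int (l * R) - int (R * s) - int r + 1"
    using min_rank_dist_range_codeword prefix_le r_ge_1 by (simp add: C n_def of_nat_diff mult.commute)
  also have "\<dots> = int n - int k + 1 - (\<lceil>real k / real r\<rceil> - 1) * (int \<delta> - 1)"
    unfolding ceil by (simp add: R_int n_def k_def algebra_simps)
  finally show ?thesis
    using dist subspace_range_codeword dim_range_codeword rank_locality_range_codeword
    by (simp add: C n_def k_def)
qed

end
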